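(* Let $G$ be a graph of order $n$ and diameter $d$. Let $T$ be a reduced tree decomposition of $G$ of length $\ell$ and width $w$. If there is a resolving set of size $k$ in $G$, then $n=\mathcal{O}(kd^2(2\ell+1)^{3w+1})$, where the constant implicit in the $\mathcal{O}$-notation is absolute (independent of $G$, $k$, $d$, $\ell$, $w$).
   Context: A set $R$ of vertices of a graph $G$ is a resolving set if for each pair $u,v$ of distinct vertices there is $x\in R$ with $d_G(x,u)\neq d_G(x,v)$. A tree decomposition of $G$ is a tree $T$ whose vertices (bags) are subsets of $V(G)$ such that: the union of all bags is $V(G)$; for every edge of $G$ some bag contains both ends; and if bag $Y$ lies on the path in $T$ from bag $X$ to bag $Z$, then $X\cap Z\subseteq Y$. Its width is $\max\{|X|-1: X\in V(T)\}$. The diameter of a bag $X$ is $\max_{x,y\in X} d_G(x,y)$ (distance in $G$), and the length of the decomposition is the largest diameter of a bag. A tree decomposition is reduced if no bag is a subset of another bag. *)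

theory Defs
  imports Complex_Main
begin

definition simple_graph :: "'a set \<Rightarrow> ('a \<Rightarrow> 'a \<Rightarrow> bool) \<Rightarrow> bool" where
  "simple_graph V E \<longleftrightarrow> finite V \<and> (\<forall>u v. E u v \<longrightarrow> u \<in> V \<and> v \<in> V)
     \<and> (\<forall>u v. E u v \<longrightarrow> E v u) \<and> (\<forall>u. \<not> E u u)"

definition walk :: "'a set \<Rightarrow> ('a \<Rightarrow> 'a \<Rightarrow> bool) \<Rightarrow> 'a list \<Rightarrow> bool" where
  "walk V E p \<longleftrightarrow> p \<noteq> [] \<and> set p \<subseteq> V \<and> (\<forall>i. Suc i < length p \<longrightarrow> E (p ! i) (p ! Suc i))"

definition gpath :: "'a set \<Rightarrow> ('a \<Rightarrow> 'a \<Rightarrow> bool) \<Rightarrow> 'a list \<Rightarrow> bool" where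
  "gpath V E p \<longleftrightarrow> walk V E p \<and> distinct p"

definition connected_graph :: "'a set \<Rightarrow> ('a \<Rightarrow> 'a \<Rightarrow> bool) \<Rightarrow> bool" where
  "connected_graph V E \<longleftrightarrow> V \<noteq> {} \<and>
     (\<forall>u\<in>V. \<forall>v\<in>V. \<exists>p. walk V E p \<and> hd p = u \<and> last p = v)"

definition gdist :: "'a set \<Rightarrow> ('a \<Rightarrow> 'a \<Rightarrow> bool) \<Rightarrow> 'a \<Rightarrow> 'a \<Rightarrow> nat" where
  "gdist V E u v = (LEAST n. \<exists>p. walk V E p \<and> hd p = u \<and> last p = v \<and> length p = Suc n)"

definition diameter :: "'a set \<Rightarrow> ('a \<Rightarrow> 'a \<Rightarrow> bool) \<Rightarrow> nat" where
  "diameter V E = Sup {gdist V E x y | x y. x \<in> V \<and> y \<in> V}"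

definition resolving_set :: "'a set \<Rightarrow> ('a \<Rightarrow> 'a \<Rightarrow> bool) \<Rightarrow> 'a set \<Rightarrow> bool" where
  "resolving_set V E R \<longleftrightarrow> R \<subseteq> V \<and>
     (\<forall>u\<in>V. \<forall>v\<in>V. u \<noteq> v \<longrightarrow> (\<exists>x\<in>R. gdist V E x u \<noteq> gdist V E x v))"

definition has_cycle :: "'a set \<Rightarrow> ('a \<Rightarrow> 'a \<Rightarrow> bool) \<Rightarrow> bool" where
  "has_cycle V E \<longleftrightarrow> (\<exists>p. gpath V E p \<and> length p \<ge> 3 \<and> E (last p) (hd p))"

definition is_tree :: "'a set \<Rightarrow> ('a \<Rightarrow> 'a \<Rightarrow> bool) \<Rightarrow> bool" where
  "is_tree V E \<longleftrightarrow> simple_graph V E \<and> connected_graph V E \<and> \<not> has_cycle V E"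

definition tree_decomposition ::
  "'a set \<Rightarrow> ('a \<Rightarrow> 'a \<Rightarrow> bool) \<Rightarrow> 'a set set \<Rightarrow> ('a set \<Rightarrow> 'a set \<Rightarrow> bool) \<Rightarrow> bool" where
  "tree_decomposition V E TV TE \<longleftrightarrow>
     is_tree TV TE \<and>
     \<Union> TV = V \<and>
     (\<forall>u v. E u v \<longrightarrow> (\<exists>X\<in>TV. u \<in> X \<and> v \<in> X)) \<and>
     (\<forall>p. gpath TV TE p \<longrightarrow> (\<forall>Y\<in>set p. hd p \<inter> last p \<subseteq> Y))"

definition reduced :: "'a set set \<Rightarrow> bool" where
  "reduced TV \<longleftrightarrow> (\<forall>X\<in>TV. \<forall>Y\<in>TV. X \<noteq> Y \<longrightarrow> \<not> X \<subseteq> Y)"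

definition td_width :: "'a set set \<Rightarrow> nat" where
  "td_width TV = Sup {card X - 1 | X. X \<in> TV}"

definition bag_diameter :: "'a set \<Rightarrow> ('a \<Rightarrow> 'a \<Rightarrow> bool) \<Rightarrow> 'a set \<Rightarrow> nat" where
  "bag_diameter V E X = Sup {gdist V E x y | x y. x \<in> X \<and> y \<in> X}"

definition td_length :: "'a set \<Rightarrow> ('a \<Rightarrow> 'a \<Rightarrow> bool) \<Rightarrow> 'a set set \<Rightarrow> nat" where
  "td_length V E TV = Sup {bag_diameter V E X | X. X \<in> TV}"

end

theory Submission
  imports Defs "HOL-Library.FuncSet"
begin

text \<open>Root the decomposition tree and process it bottom-up. Call the vertices of the resolving
  set landmarks, and a set of vertices guarded if the distance from every landmark to each of
  its vertices is realised by a shortest path through one of two fixed bags. The induction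
  splits \<open>V\<close> into at most \<open>3 k\<close> guarded classes. On a guarded class, a vertex is determined
  by its distances to the two bags (the set is resolving), and the distances from a vertex to
  a bag \<open>B\<close> of diameter at most \<open>\<ell>\<close> take at most \<open>(d + 1) (2 \<ell> + 1)^|B|\<close> values. Hence
  \<open>n \<le> 3 k ((d + 1) (2 \<ell> + 1)^(w+1))^2\<close>, which is at most \<open>12 k d^2 (2 \<ell> + 1)^(3 w + 1)\<close>
  since \<open>d, w \<ge> 1\<close>.\<close>

section \<open>Walks\<close>

lemma walk_Nil [simp]: "\<not> walk V E []"
  by (simp add: walk_def)

lemma walk_single [simp]: "walk V E [a] \<longleftrightarrow> a \<in> V"
  by (simp add: walk_def)

lemma walk_Cons_Cons [simp]:
  "walk V E (a # b # p) \<longleftrightarrow> a \<in> V \<and> E a b \<and> walk V E (b # p)"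
  by (auto simp: walk_def nth_Cons split: nat.splits)

lemma walk_Cons_iff:
  "walk V E (a # p) \<longleftrightarrow> a \<in> V \<and> (p = [] \<or> E a (hd p) \<and> walk V E p)"
  by (cases p) auto

lemma walk_appendD1: "walk V E (xs @ ys) \<Longrightarrow> xs \<noteq> [] \<Longrightarrow> walk V E xs"
  by (induction xs) (auto simp: walk_Cons_iff)

lemma walk_appendD2: "walk V E (xs @ ys) \<Longrightarrow> ys \<noteq> [] \<Longrightarrow> walk V E ys"
  by (induction xs) (auto simp: walk_Cons_iff)

lemma walk_join: "walk V E (xs @ [y]) \<Longrightarrow> walk V E (y # zs) \<Longrightarrow> walk V E (xs @ y # zs)"
proof (induction xs)
  case (Cons a xs)
  then show ?case by (cases xs) (auto simp: walk_Cons_iff)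
qed simp

lemma walk_rev:
  assumes "\<And>u v. E u v \<Longrightarrow> E v u" and "walk V E p"
  shows "walk V E (rev p)"
  using assms(2)
proof (induction p)
  case (Cons a p)
  show ?case
  proof (cases p)
    case (Cons b q)
    then have "walk V E (rev q @ [b])" "walk V E [b, a]"
      using Cons.IH Cons.prems assms(1) by (auto simp: walk_Cons_iff)
    then show ?thesis using \<open>p = b # q\<close> walk_join[of V E "rev q" b "[a]"] by simp
  qed (use Cons.prems in simp)
qed simp

lemma walk_mono:
  "walk V E p \<Longrightarrow> V \<subseteq> V' \<Longrightarrow> (\<And>a b. E a b \<Longrightarrow> E' a b) \<Longrightarrow> walk V' E' p"
  by (auto simp: walk_def)

lemma walk_to_gpath:
  "walk V E p \<Longrightarrow> \<exists>q. gpath V E q \<and> hd q = hd p \<and> last q = last p"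
proof (induction "length p" arbitrary: p rule: less_induct)
  case less
  show ?case
  proof (cases "distinct p")
    case True
    then show ?thesis using less.prems by (auto simp: gpath_def)
  next
    case False
    then obtain xs ys zs y where p: "p = xs @ [y] @ ys @ [y] @ zs"
      using not_distinct_decomp by blast
    have "walk V E (xs @ [y])" "walk V E (y # zs)"
      using less.prems p walk_appendD1[of V E "xs @ [y]"] walk_appendD2[of V E "xs @ [y] @ ys"]
      by auto
    then have "walk V E (xs @ y # zs)" by (rule walk_join)
    moreover have "length (xs @ y # zs) < length p" using p by simp
    ultimately obtain q where "gpath V E q" "hd q = hd (xs @ y # zs)" "last q = last (xs @ y # zs)"
      using less.hyps by blast
    then show ?thesis using p by (cases xs; cases zs) auto
  qed
qed

lemma gpath_appendD2: "gpath V E (xs @ ys) \<Longrightarrow> ys \<noteq> [] \<Longrightarrow> gpath V E ys"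
  by (auto simp: gpath_def dest: walk_appendD2)

section \<open>Distances\<close>

lemma gdist_less_length:
  assumes "walk V E p" "hd p = u" "last p = v"
  shows "gdist V E u v < length p"
proof -
  have "length p = Suc (length p - 1)" using assms(1) by (cases p) auto
  then have "gdist V E u v \<le> length p - 1"
    unfolding gdist_def using assms by (intro Least_le) auto
  then show ?thesis using assms(1) by (cases p) auto
qed

lemma shortest_walk:
  assumes "connected_graph V E" "u \<in> V" "v \<in> V"
  obtains p where "walk V E p" "hd p = u" "last p = v" "length p = Suc (gdist V E u v)"
proof -
  obtain p where "walk V E p" "hd p = u" "last p = v"
    using assms unfolding connected_graph_def by blast
  then have "\<exists>n p. walk V E p \<and> hd p = u \<and> last p = v \<and> length p = Suc n"
    by (intro exI[of _ "length p - 1"] exI[of _ p]) (cases p; auto)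
  from LeastI_ex[OF this] show ?thesis using that unfolding gdist_def by blast
qed

lemma connected_graph_gpath:
  assumes "connected_graph V E" "x \<in> V" "y \<in> V"
  obtains g where "gpath V E g" "hd g = x" "last g = y"
  using assms walk_to_gpath unfolding connected_graph_def by metis

locale connected_simple_graph =
  fixes V :: "'a set" and E :: "'a \<Rightarrow> 'a \<Rightarrow> bool"
  assumes simple: "simple_graph V E" and connected: "connected_graph V E"
begin

abbreviation D :: "'a \<Rightarrow> 'a \<Rightarrow> nat" where
  "D \<equiv> gdist V E"

lemma finite_V: "finite V"
  using simple by (simp add: simple_graph_def)

lemma edge_sym: "E u v \<Longrightarrow> E v u"
  using simple by (simp add: simple_graph_def)

lemma edge_irrefl: "\<not> E u u"
  using simple by (simp add: simple_graph_def)

lemma gdist_eq_0_imp_eq: "u \<in> V \<Longrightarrow> v \<in> V \<Longrightarrow> D u v = 0 \<Longrightarrow> u = v"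
  by (rule shortest_walk[OF connected, of u v]) (auto simp: length_Suc_conv)

lemma edge_exists:
  assumes "u \<in> V" "v \<in> V" "u \<noteq> v"
  obtains a b where "E a b"
proof -
  obtain p where "walk V E p" "hd p = u" "last p = v"
    using connected assms(1,2) unfolding connected_graph_def by blast
  with assms(3) show ?thesis using that by (cases p; cases "tl p") auto
qed

lemma gdist_triangle:
  assumes "u \<in> V" "v \<in> V" "x \<in> V"
  shows "D u x \<le> D u v + D v x"
proof -
  obtain p where p: "walk V E (p @ [v])" "hd (p @ [v]) = u" "length p = D u v"
    using shortest_walk[OF connected assms(1,2)]
    by (metis append_butlast_last_id diff_Suc_1 length_butlast walk_Nil)
  obtain q where q: "walk V E (v # q)" "last (v # q) = x" "length q = D v x"
    using shortest_walk[OF connected assms(2,3)] by (metis hd_Cons_tl length_tl diff_Suc_1 walk_Nil)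
  have "walk V E (p @ v # q)" using p(1) q(1) by (rule walk_join)
  moreover have "hd (p @ v # q) = u" "last (p @ v # q) = x"
    using p(2) q(2) by (cases p; simp)+
  ultimately have "D u x < length (p @ v # q)" by (rule gdist_less_length)
  then show ?thesis using p(3) q(3) by simp
qed

lemma gdist_commute:
  assumes "u \<in> V" "v \<in> V"
  shows "D u v = D v u"
proof -
  have "D a b \<le> D b a" if "a \<in> V" "b \<in> V" for a b
  proof (rule shortest_walk[OF connected \<open>b \<in> V\<close> \<open>a \<in> V\<close>])
    fix p assume p: "walk V E p" "hd p = b" "last p = a" "length p = Suc (D b a)"
    have "walk V E (rev p)" using walk_rev[OF _ p(1)] edge_sym by blast
    moreover have "hd (rev p) = a" "last (rev p) = b" using p by (auto simp: hd_rev last_rev)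
    ultimately have "D a b < length (rev p)" by (rule gdist_less_length)
    then show ?thesis using p(4) by simp
  qed
  then show ?thesis using assms by (simp add: le_antisym)
qed

definition inner_boundary :: "'a set \<Rightarrow> 'a set" where
  "inner_boundary A = {u \<in> A. \<exists>y. E u y \<and> y \<notin> A}"

lemma walk_meets_boundary:
  assumes "inner_boundary A \<subseteq> S" "walk V E p" "hd p \<in> A" "last p \<notin> A \<or> last p \<in> S"
  shows "\<exists>xs s ys. p = xs @ s # ys \<and> s \<in> S"
  using assms(2-4)
proof (induction p)
  case (Cons a p)
  show ?case
  proof (cases "a \<in> S")
    case True
    then show ?thesis by (intro exI[of _ "[]"]) auto
  next
    case False
    then obtain b q where p: "p = b # q" using Cons.prems by (cases p) auto
    then have "b \<in> A"
      using assms(1) False Cons.prems unfolding inner_boundary_def by auto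
    then obtain xs s ys where "p = xs @ s # ys" "s \<in> S"
      using Cons.IH Cons.prems p by auto
    then show ?thesis by (intro exI[of _ "a # xs"]) auto
  qed
qed simp

lemma gdist_split_at_boundary:
  assumes "A \<subseteq> V" "inner_boundary A \<subseteq> S" "a \<in> A" "b \<in> V" "b \<notin> A \<or> b \<in> S"
  shows "\<exists>s\<in>S. D a b = D a s + D s b"
proof -
  have a: "a \<in> V" using assms by auto
  obtain p where p: "walk V E p" "hd p = a" "last p = b" "length p = Suc (D a b)"
    using shortest_walk[OF connected a assms(4)] .
  obtain xs s ys where ps: "p = xs @ s # ys" "s \<in> S"
    using walk_meets_boundary[OF assms(2) p(1)] p assms by auto
  have s: "s \<in> V" using p(1) ps unfolding walk_def by auto
  have "walk V E (xs @ [s])" "walk V E (s # ys)"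
    using p(1) ps walk_appendD1[of V E "xs @ [s]" ys] walk_appendD2[of V E xs "s # ys"] by auto
  moreover have "hd (xs @ [s]) = a" "hd (s # ys) = s" "last (xs @ [s]) = s" "last (s # ys) = b"
    using p ps by (cases xs; cases ys; simp)+
  ultimately have "D a s < length (xs @ [s])" "D s b < length (s # ys)"
    by (blast intro: gdist_less_length)+
  then have "D a s + D s b \<le> D a b" using p(4) ps by simp
  with gdist_triangle[OF a s assms(4)] ps(2) show ?thesis by (intro bexI[of _ s]) auto
qed

end

section \<open>Rooted tree decompositions\<close>

text \<open>Rooted subtrees of a tree decomposition are represented by their bag sets alone; the
  side conditions of the rules carry the running intersection property.\<close>

inductive rooted_subtree :: "'a set set \<Rightarrow> 'a set \<Rightarrow> bool" where
  single: "rooted_subtree {r} r"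
| add_root: "rooted_subtree M c \<Longrightarrow> r \<notin> M \<Longrightarrow> \<Union>M \<inter> r \<subseteq> c \<Longrightarrow> rooted_subtree (insert r M) r"
| glue: "rooted_subtree N1 r \<Longrightarrow> rooted_subtree N2 r \<Longrightarrow> N1 \<inter> N2 = {r} \<Longrightarrow> \<Union>N1 \<inter> \<Union>N2 \<subseteq> r
    \<Longrightarrow> rooted_subtree (N1 \<union> N2) r"

lemma rooted_subtree_root: "rooted_subtree N r \<Longrightarrow> r \<in> N"
  by (induction rule: rooted_subtree.induct) auto

lemma rooted_subtree_pair: "Z \<noteq> r \<Longrightarrow> rooted_subtree {r, Z} r"
  using rooted_subtree.add_root[OF rooted_subtree.single[of Z], of r] by auto

lemma rooted_subtree_add_leaf:
  "rooted_subtree N r \<Longrightarrow> Y \<in> N \<Longrightarrow> Z \<notin> N \<Longrightarrow> Z \<inter> \<Union>N \<subseteq> Y \<Longrightarrow> rooted_subtree (insert Z N) r"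
proof (induction arbitrary: Y rule: rooted_subtree.induct)
  case (single r)
  then show ?case using rooted_subtree_pair[of Z r] by (simp add: insert_commute)
next
  case (add_root M c r)
  show ?case
  proof (cases "Y = r")
    case True
    have "rooted_subtree (insert r M \<union> {r, Z}) r"
      using add_root True by (intro rooted_subtree.glue rooted_subtree.add_root rooted_subtree_pair) auto
    then show ?thesis by (simp add: insert_commute)
  next
    case False
    then have "rooted_subtree (insert Z M) c" using add_root by (intro add_root.IH) auto
    then have "rooted_subtree (insert r (insert Z M)) r"
      using add_root False by (intro rooted_subtree.add_root) auto
    then show ?thesis by (simp add: insert_commute)
  qed
next
  case (glue N1 r N2)
  show ?case
  proof (cases "Y \<in> N1")
    case True
    have "Z \<inter> \<Union>N2 \<subseteq> r" using glue.prems(3) glue.hyps(4) True by blast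
    then have "rooted_subtree (insert Z N1 \<union> N2) r"
      using glue.hyps glue.prems True by (intro rooted_subtree.glue glue.IH(1)) auto
    then show ?thesis by simp
  next
    case False
    then have Y2: "Y \<in> N2" using glue.prems(1) by blast
    then have "Z \<inter> \<Union>N1 \<subseteq> r" using glue.prems(3) glue.hyps(4) by blast
    then have "rooted_subtree (N1 \<union> insert Z N2) r"
      using glue.hyps glue.prems Y2 by (intro rooted_subtree.glue glue.IH(2)) auto
    then show ?thesis by simp
  qed
qed

lemma longest_gpath:
  assumes "finite V" "gpath V E p0"
  obtains p where "gpath V E p" "length p0 \<le> length p" "\<And>q. gpath V E q \<Longrightarrow> length q \<le> length p"
proof -
  have bounded: "length q \<le> card V" if "gpath V E q" for q
  proof -
    have "set q \<subseteq> V" "distinct q" using that by (auto simp: gpath_def walk_def)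
    then show ?thesis using assms(1) by (metis card_mono distinct_card)
  qed
  obtain m where "\<exists>p. gpath V E p \<and> length p = m" "\<And>m'. \<exists>q. gpath V E q \<and> length q = m' \<Longrightarrow> m' \<le> m"
    using Nat.ex_has_greatest_nat[of "\<lambda>m. \<exists>q. gpath V E q \<and> length q = m" "length p0" "card V"]
      assms(2) bounded by blast
  then show ?thesis using that assms(2) by blast
qed

text \<open>The end of a longest path is a leaf: another neighbour would extend the path or close
  a cycle.\<close>

lemma tree_has_leaf:
  assumes "is_tree N TE" "u \<in> N" "v \<in> N" "u \<noteq> v"
  obtains Z Y where "TE Z Y" "\<And>W. TE Z W \<Longrightarrow> W = Y"
proof -
  have simple: "simple_graph N TE" and acyclic: "\<not> has_cycle N TE"
    and connected: "connected_graph N TE"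
    using assms(1) by (auto simp: is_tree_def)
  have sym: "\<And>a b. TE a b \<Longrightarrow> TE b a" and irrefl: "\<And>a. \<not> TE a a" and fin: "finite N"
    and in_N: "\<And>a b. TE a b \<Longrightarrow> b \<in> N"
    using simple by (auto simp: simple_graph_def)
  obtain p0 where p0: "gpath N TE p0" "hd p0 = u" "last p0 = v"
    using connected_graph_gpath[OF connected assms(2,3)] .
  then have "length p0 \<ge> 2" using assms(4) by (cases p0; cases "tl p0") (auto simp: gpath_def)
  obtain p where p: "gpath N TE p" "length p0 \<le> length p"
    and longest: "\<And>q. gpath N TE q \<Longrightarrow> length q \<le> length p"
    using longest_gpath[OF fin p0(1)] by blast
  then obtain Z Y rq where "rev p = Z # Y # rq" using \<open>length p0 \<ge> 2\<close>
    by (cases "rev p"; cases "tl (rev p)") auto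
  then obtain q where pq: "p = q @ [Y, Z]" by (metis append.assoc append_Cons append_Nil rev.simps rev_rev_ident)
  have YZ: "TE Y Z" using p(1) pq walk_appendD2[of N TE q "[Y, Z]"] by (simp add: gpath_def)
  show ?thesis
  proof
    show "TE Z Y" using YZ sym by blast
    fix W assume ZW: "TE Z W"
    show "W = Y"
    proof (rule ccontr)
      assume "W \<noteq> Y"
      moreover have "W \<noteq> Z" using ZW irrefl by auto
      ultimately consider "W \<notin> set p" | q1 q2 where "q = q1 @ W # q2"
        using pq by (auto dest: split_list)
      then show False
      proof cases
        case 1
        have "walk N TE ((q @ [Y]) @ [Z])" "walk N TE [Z, W]"
          using p(1) pq ZW in_N[OF ZW] in_N[OF YZ] by (auto simp: gpath_def)
        then have "walk N TE ((q @ [Y]) @ Z # [W])" by (rule walk_join)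
        then have "gpath N TE (p @ [W])" using 1 p(1) pq by (auto simp: gpath_def)
        then show False using longest by fastforce
      next
        case 2
        then have "gpath N TE (W # q2 @ [Y, Z])" using p(1) pq gpath_appendD2[of N TE q1] by auto
        then have "has_cycle N TE" using ZW unfolding has_cycle_def
          by (intro exI[of _ "W # q2 @ [Y, Z]"]) auto
        then show False using acyclic by simp
      qed
    qed
  qed
qed

lemma gpath_avoids_leaf:
  assumes "\<And>a b. TE a b \<Longrightarrow> TE b a" "\<And>W. TE Z W \<Longrightarrow> W = Y"
    and "gpath N TE g" "hd g \<noteq> Z" "last g \<noteq> Z"
  shows "Z \<notin> set g"
proof
  assume "Z \<in> set g"
  then obtain g1 g2 where g: "g = g1 @ Z # g2" by (meson split_list)
  have "g1 \<noteq> []" "g2 \<noteq> []" using assms(4,5) g by auto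
  then have "g = butlast g1 @ last g1 # Z # g2" using g by simp
  then have "walk N TE (last g1 # Z # g2)"
    using assms(3) walk_appendD2[of N TE "butlast g1" "last g1 # Z # g2"] by (simp add: gpath_def)
  then have "TE (last g1) Z" "TE Z (hd g2)" using \<open>g2 \<noteq> []\<close> by (cases g2; auto)+
  then have "last g1 = Y" "hd g2 = Y" using assms(1,2) by blast+
  then show False using assms(3) g \<open>g1 \<noteq> []\<close> \<open>g2 \<noteq> []\<close>
    by (metis disjoint_iff distinct_append distinct.simps(2) gpath_def hd_in_set last_in_set list.set_intros(2))
qed

lemma is_tree_delete_leaf:
  assumes "is_tree N TE" "\<And>W. TE Z W \<Longrightarrow> W = Y" "Y \<in> N" "Y \<noteq> Z"
  shows "is_tree (N - {Z}) (\<lambda>a b. TE a b \<and> a \<noteq> Z \<and> b \<noteq> Z)" (is "is_tree ?N ?TE")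
proof -
  have simple: "simple_graph N TE" and acyclic: "\<not> has_cycle N TE"
    and connected: "connected_graph N TE"
    using assms(1) by (auto simp: is_tree_def)
  have sym: "\<And>a b. TE a b \<Longrightarrow> TE b a" using simple by (simp add: simple_graph_def)
  have "simple_graph ?N ?TE" using simple by (auto simp: simple_graph_def)
  moreover have "connected_graph ?N ?TE"
    unfolding connected_graph_def
  proof (intro conjI ballI)
    show "?N \<noteq> {}" using assms(3,4) by blast
    fix x y assume "x \<in> ?N" "y \<in> ?N"
    then obtain g where g: "gpath N TE g" "hd g = x" "last g = y"
      using connected_graph_gpath[OF connected] by blast
    then have "Z \<notin> set g"
      using gpath_avoids_leaf[where TE = TE and Z = Z, OF sym assms(2)] \<open>x \<in> ?N\<close> \<open>y \<in> ?N\<close> by blast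
    then have "walk ?N ?TE g" using g(1) by (auto simp: gpath_def walk_def)
    then show "\<exists>p. walk ?N ?TE p \<and> hd p = x \<and> last p = y" using g by blast
  qed
  moreover have "\<not> has_cycle ?N ?TE"
    using acyclic walk_mono[of ?N ?TE _ N TE] by (auto simp: has_cycle_def gpath_def)
  ultimately show ?thesis by (simp add: is_tree_def)
qed

definition running_intersection :: "'a set set \<Rightarrow> ('a set \<Rightarrow> 'a set \<Rightarrow> bool) \<Rightarrow> bool" where
  "running_intersection N TE \<longleftrightarrow> (\<forall>p. gpath N TE p \<longrightarrow> (\<forall>Y\<in>set p. hd p \<inter> last p \<subseteq> Y))"

lemma leaf_bag_separated:
  assumes "is_tree N TE" "running_intersection N TE" "TE Z Y" "\<And>W. TE Z W \<Longrightarrow> W = Y"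
  shows "Z \<inter> \<Union>(N - {Z}) \<subseteq> Y"
proof
  have simple: "simple_graph N TE" and connected: "connected_graph N TE"
    using assms(1) by (auto simp: is_tree_def)
  have sym: "\<And>a b. TE a b \<Longrightarrow> TE b a" and Y: "Y \<in> N" and Z: "Z \<in> N" and "Y \<noteq> Z"
    using simple assms(3) by (auto simp: simple_graph_def)
  fix x assume "x \<in> Z \<inter> \<Union>(N - {Z})"
  then obtain X where X: "X \<in> N" "X \<noteq> Z" "x \<in> X" "x \<in> Z" by blast
  obtain g where g: "gpath N TE g" "hd g = Y" "last g = X"
    using connected_graph_gpath[OF connected Y X(1)] .
  then have "Z \<notin> set g"
    using gpath_avoids_leaf[where TE = TE and Z = Z, OF sym assms(4)] \<open>Y \<noteq> Z\<close> X(2) by blast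
  moreover have "g \<noteq> []" using g(1) by (auto simp: gpath_def)
  ultimately have "gpath N TE (Z # g)" using g assms(3) Z by (cases g) (auto simp: gpath_def)
  moreover have "Y \<in> set (Z # g)" using g(2) \<open>g \<noteq> []\<close> by (cases g) auto
  ultimately have "Z \<inter> last (Z # g) \<subseteq> Y" using assms(2) unfolding running_intersection_def by fastforce
  then show "x \<in> Y" using X g(3) \<open>g \<noteq> []\<close> by auto
qed

lemma tree_rooted_subtree:
  assumes "is_tree N TE" "running_intersection N TE"
  shows "\<exists>r. rooted_subtree N r"
  using assms
proof (induction "card N" arbitrary: N TE rule: less_induct)
  case less
  have simple: "simple_graph N TE" and connected: "connected_graph N TE"
    using less.prems(1) by (auto simp: is_tree_def)
  show ?case
  proof (cases "\<exists>u\<in>N. \<exists>v\<in>N. u \<noteq> v")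
    case False
    moreover obtain r where "r \<in> N" using connected unfolding connected_graph_def by blast
    ultimately have "N = {r}" by blast
    then show ?thesis using rooted_subtree.single by blast
  next
    case True
    then obtain Z Y where leaf: "TE Z Y" "\<And>W. TE Z W \<Longrightarrow> W = Y"
      using tree_has_leaf[OF less.prems(1)] by blast
    have Y: "Y \<in> N" "Y \<noteq> Z" and Z: "Z \<in> N" and fin: "finite N"
      using simple leaf(1) by (auto simp: simple_graph_def)
    let ?TE = "\<lambda>a b. TE a b \<and> a \<noteq> Z \<and> b \<noteq> Z"
    have "is_tree (N - {Z}) ?TE" using is_tree_delete_leaf[OF less.prems(1) leaf(2) Y] .
    moreover have "running_intersection (N - {Z}) ?TE"
      unfolding running_intersection_def
    proof (intro allI impI)
      fix p assume "gpath (N - {Z}) ?TE p"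
      then have "gpath N TE p" using walk_mono[of "N - {Z}" ?TE p N TE] by (auto simp: gpath_def)
      then show "\<forall>Y\<in>set p. hd p \<inter> last p \<subseteq> Y"
        using less.prems(2) by (simp add: running_intersection_def)
    qed
    moreover have "card (N - {Z}) < card N" using fin Z by (rule card_Diff1_less)
    ultimately obtain r where "rooted_subtree (N - {Z}) r" using less.hyps by blast
    then have "rooted_subtree (insert Z (N - {Z})) r"
      using leaf_bag_separated[OF less.prems leaf] Y by (intro rooted_subtree_add_leaf) auto
    then show ?thesis using Z by (metis insert_Diff)
  qed
qed

section \<open>Covering the vertices by guarded classes\<close>

locale landmark_decomposition = connected_simple_graph V E for V :: "'a set" and E +
  fixes TV :: "'a set set" and R :: "'a set"
  assumes bags_cover: "\<Union>TV = V"
    and edge_in_bag: "E u v \<Longrightarrow> \<exists>X\<in>TV. u \<in> X \<and> v \<in> X"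
    and landmarks_subset: "R \<subseteq> V"
begin

definition guarded :: "'a set \<Rightarrow> bool" where
  "guarded g \<longleftrightarrow> g \<subseteq> V \<and>
     (\<exists>B1\<in>TV. \<exists>B2\<in>TV. \<forall>x\<in>R. \<forall>v\<in>g. \<exists>s\<in>B1 \<union> B2. D x v = D x s + D s v)"

definition guarded_cover :: "'a set \<Rightarrow> 'a set set \<Rightarrow> bool" where
  "guarded_cover A \<G> \<longleftrightarrow> finite \<G> \<and> A \<subseteq> \<Union>\<G> \<and> (\<forall>g\<in>\<G>. guarded g)"

definition attached :: "'a set set \<Rightarrow> 'a set \<Rightarrow> bool" where
  "attached N r \<longleftrightarrow> r \<in> N \<and> N \<subseteq> TV \<and> \<Union>N \<inter> \<Union>(TV - N) \<subseteq> r"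

definition inner_landmarks :: "'a set set \<Rightarrow> 'a set \<Rightarrow> 'a set" where
  "inner_landmarks N r = R \<inter> (\<Union>N - r)"

lemma bag_subset_V: "X \<in> TV \<Longrightarrow> X \<subseteq> V"
  using bags_cover Union_upper by blast

lemma finite_inner_landmarks: "finite (inner_landmarks N r)"
  using landmarks_subset finite_V by (auto simp: inner_landmarks_def intro: finite_subset)

lemma attached_subset_V: "attached N r \<Longrightarrow> \<Union>N \<subseteq> V"
  using bags_cover by (auto simp: attached_def)

lemma attached_root_subset_V: "attached N r \<Longrightarrow> r \<subseteq> V"
  using bags_cover by (auto simp: attached_def)

lemma attached_inner_boundary:
  assumes "attached N r"
  shows "inner_boundary (\<Union>N) \<subseteq> r"
proof
  fix u assume "u \<in> inner_boundary (\<Union>N)"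
  then obtain y where u: "u \<in> \<Union>N" and uy: "E u y" "y \<notin> \<Union>N"
    unfolding inner_boundary_def by blast
  obtain X where "X \<in> TV" "u \<in> X" "y \<in> X" using edge_in_bag[OF uy(1)] by blast
  with uy(2) have "u \<in> \<Union>(TV - N)" by blast
  with u assms show "u \<in> r" unfolding attached_def by blast
qed

lemma gdist_through_root:
  assumes "attached N r" "v \<in> \<Union>N" "x \<in> R" "x \<notin> \<Union>N \<or> x \<in> r"
  shows "\<exists>s\<in>r. D x v = D x s + D s v"
proof -
  have N: "\<Union>N \<subseteq> V" using attached_subset_V[OF assms(1)] .
  have x: "x \<in> V" and v: "v \<in> V" using assms(2,3) N landmarks_subset by auto
  obtain s where s: "s \<in> r" "D v x = D v s + D s x"
    using gdist_split_at_boundary[OF N attached_inner_boundary[OF assms(1)] assms(2) x assms(4)] by blast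
  have "s \<in> V" using s(1) attached_root_subset_V[OF assms(1)] by blast
  with s x v show ?thesis by (metis gdist_commute add.commute)
qed

lemma guarded_without_inner_landmarks:
  assumes "attached N r" "inner_landmarks N r = {}"
  shows "guarded (\<Union>N)"
proof -
  have "\<exists>s\<in>r \<union> r. D x v = D x s + D s v" if "x \<in> R" "v \<in> \<Union>N" for x v
  proof -
    have "x \<notin> \<Union>N \<or> x \<in> r" using assms(2) that(1) by (auto simp: inner_landmarks_def)
    then show ?thesis using gdist_through_root[OF assms(1) that(2,1)] by simp
  qed
  moreover have "r \<in> TV" using assms(1) by (auto simp: attached_def)
  ultimately show ?thesis using attached_subset_V[OF assms(1)] unfolding guarded_def by blast
qed

text \<open>Invariant of the induction over a rooted subtree \<open>N\<close>: the vertex set \<open>A\<close> contains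
  the landmarks strictly inside the subtree, is left only through bag \<open>K\<close>, and is covered by
  at most \<open>3 m - 2\<close> guarded classes, where \<open>m\<close> is the number of those landmarks.\<close>

definition partial_cover :: "'a set set \<Rightarrow> 'a set \<Rightarrow> 'a set \<Rightarrow> 'a set \<Rightarrow> 'a set set \<Rightarrow> bool" where
  "partial_cover N r A K \<G> \<longleftrightarrow> A \<subseteq> \<Union>N \<and> K \<in> TV \<and> inner_boundary A \<subseteq> K
     \<and> inner_landmarks N r \<subseteq> A \<and> guarded_cover A \<G> \<and> card \<G> + 2 \<le> 3 * card (inner_landmarks N r)"

text \<open>The vertices outside \<open>A\<close> are guarded by \<open>K\<close> and the root bag: a landmark inside
  reaches them through \<open>K\<close>, a landmark outside through the root.\<close>

lemma guarded_remainder: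
  assumes "partial_cover N r A K \<G>" "attached N r"
  shows "guarded (\<Union>N - A)"
proof -
  have A: "A \<subseteq> V" "inner_boundary A \<subseteq> K" "K \<in> TV"
    using assms(1) attached_subset_V[OF assms(2)] by (auto simp: partial_cover_def)
  have "\<exists>s\<in>K \<union> r. D x v = D x s + D s v" if x: "x \<in> R" and v: "v \<in> \<Union>N - A" for x v
  proof (cases "x \<in> inner_landmarks N r")
    case True
    then have "x \<in> A" using assms(1) by (auto simp: partial_cover_def)
    then show ?thesis
      using gdist_split_at_boundary[OF A(1,2)] v attached_subset_V[OF assms(2)] by blast
  next
    case False
    then have "x \<notin> \<Union>N \<or> x \<in> r" using x by (auto simp: inner_landmarks_def)
    then show ?thesis using gdist_through_root[OF assms(2) _ x] v by blast
  qed
  moreover have "r \<in> TV" using assms(2) by (auto simp: attached_def)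
  ultimately show ?thesis using attached_subset_V[OF assms(2)] A(3) unfolding guarded_def by blast
qed

lemma partial_cover_close:
  assumes "partial_cover N r A K \<G>" "attached N r"
  shows "guarded_cover (\<Union>N) (insert (\<Union>N - A) \<G>)"
    and "card (insert (\<Union>N - A) \<G>) + 1 \<le> 3 * card (inner_landmarks N r)"
proof -
  have "finite \<G>" "card \<G> + 2 \<le> 3 * card (inner_landmarks N r)"
    using assms(1) by (auto simp: partial_cover_def guarded_cover_def)
  then show "card (insert (\<Union>N - A) \<G>) + 1 \<le> 3 * card (inner_landmarks N r)"
    by (simp add: card_insert_if)
  show "guarded_cover (\<Union>N) (insert (\<Union>N - A) \<G>)"
    using assms(1) guarded_remainder[OF assms] by (auto simp: partial_cover_def guarded_cover_def)
qed

lemma partial_cover_mono: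
  assumes "partial_cover M c A K \<G>" "\<Union>M \<subseteq> \<Union>N" "inner_landmarks N r = inner_landmarks M c"
  shows "partial_cover N r A K \<G>"
  using assms by (auto simp: partial_cover_def)

lemma attached_add_root:
  assumes "attached (insert r M) r" "c \<in> M" "\<Union>M \<inter> r \<subseteq> c"
  shows "attached M c"
proof -
  have "\<Union>(TV - M) \<subseteq> r \<union> \<Union>(TV - insert r M)" by blast
  moreover have "\<Union>M \<inter> \<Union>(TV - insert r M) \<subseteq> r" using assms(1) by (auto simp: attached_def)
  ultimately have "\<Union>M \<inter> \<Union>(TV - M) \<subseteq> c" using assms(3) by blast
  then show ?thesis using assms(1,2) by (simp add: attached_def)
qed

lemma attached_glue:
  assumes "attached (N1 \<union> N2) r" "r \<in> N1" "\<Union>N1 \<inter> \<Union>N2 \<subseteq> r"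
  shows "attached N1 r"
proof -
  have "\<Union>(TV - N1) \<subseteq> \<Union>(TV - (N1 \<union> N2)) \<union> \<Union>N2" by blast
  moreover have "\<Union>N1 \<inter> \<Union>(TV - (N1 \<union> N2)) \<subseteq> r" using assms(1) by (auto simp: attached_def)
  ultimately have "\<Union>N1 \<inter> \<Union>(TV - N1) \<subseteq> r" using assms(3) by blast
  then show ?thesis using assms(1,2) by (simp add: attached_def)
qed

lemma partial_cover_add_root:
  assumes att: "attached (insert r M) r" and "c \<in> M" "\<Union>M \<inter> r \<subseteq> c"
    and IH: "inner_landmarks M c \<noteq> {} \<Longrightarrow> \<exists>A K \<G>. partial_cover M c A K \<G>"
    and inner: "inner_landmarks (insert r M) r \<noteq> {}"
  shows "\<exists>A K \<G>. partial_cover (insert r M) r A K \<G>"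
proof -
  have attM: "attached M c" using attached_add_root[OF assms(1-3)] .
  have c: "c \<in> TV" using attM by (auto simp: attached_def)
  have sub: "inner_landmarks M c \<subseteq> inner_landmarks (insert r M) r"
    and inside: "inner_landmarks (insert r M) r \<subseteq> \<Union>M"
    using assms(3) by (auto simp: inner_landmarks_def)
  have "card (inner_landmarks (insert r M) r) \<ge> 1"
    using inner finite_inner_landmarks by (simp add: Suc_le_eq card_gt_0_iff)
  then have new_cover: "partial_cover (insert r M) r (\<Union>M) c \<G>"
    if "guarded_cover (\<Union>M) \<G>" "card \<G> + 2 \<le> 3 * card (inner_landmarks (insert r M) r)" for \<G>
    using that c attached_inner_boundary[OF attM] inside by (auto simp: partial_cover_def)
  show ?thesis
  proof (cases "inner_landmarks M c = {}")
    case True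
    have "guarded_cover (\<Union>M) {\<Union>M}"
      using guarded_without_inner_landmarks[OF attM True] by (simp add: guarded_cover_def)
    then show ?thesis
      using new_cover \<open>card (inner_landmarks (insert r M) r) \<ge> 1\<close> by fastforce
  next
    case False
    then obtain A K \<G> where cov: "partial_cover M c A K \<G>" using IH by blast
    show ?thesis
    proof (cases "inner_landmarks (insert r M) r = inner_landmarks M c")
      case True
      then show ?thesis using partial_cover_mono[OF cov] by blast
    next
      case False
      then have "card (inner_landmarks M c) < card (inner_landmarks (insert r M) r)"
        using sub finite_inner_landmarks by (simp add: psubset_card_mono psubset_eq)
      then show ?thesis using partial_cover_close[OF cov attM] new_cover by fastforce
    qed
  qed
qed

lemma partial_cover_glue:
  assumes att: "attached (N1 \<union> N2) r" and "r \<in> N1" "r \<in> N2" and sep: "\<Union>N1 \<inter> \<Union>N2 \<subseteq> r"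
    and IH1: "inner_landmarks N1 r \<noteq> {} \<Longrightarrow> \<exists>A K \<G>. partial_cover N1 r A K \<G>"
    and IH2: "inner_landmarks N2 r \<noteq> {} \<Longrightarrow> \<exists>A K \<G>. partial_cover N2 r A K \<G>"
    and inner: "inner_landmarks (N1 \<union> N2) r \<noteq> {}"
  shows "\<exists>A K \<G>. partial_cover (N1 \<union> N2) r A K \<G>"
proof -
  let ?L = "inner_landmarks"
  have att1: "attached N1 r" using attached_glue[OF att assms(2) sep] .
  have att2: "attached N2 r" using attached_glue[of N2 N1 r] att assms(3) sep by (simp add: Un_commute Int_commute)
  have L: "?L (N1 \<union> N2) r = ?L N1 r \<union> ?L N2 r" by (auto simp: inner_landmarks_def)
  have "?L N1 r \<inter> ?L N2 r = {}" using sep by (auto simp: inner_landmarks_def)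
  then have card_L: "card (?L (N1 \<union> N2) r) = card (?L N1 r) + card (?L N2 r)"
    using L finite_inner_landmarks by (simp add: card_Un_disjoint)
  consider "?L N2 r = {}" | "?L N1 r = {}" | "?L N1 r \<noteq> {}" "?L N2 r \<noteq> {}" by blast
  then show ?thesis
  proof cases
    case 1
    then show ?thesis using IH1 inner L partial_cover_mono[of N1 r _ _ _ "N1 \<union> N2" r] by force
  next
    case 2
    then show ?thesis using IH2 inner L partial_cover_mono[of N2 r _ _ _ "N1 \<union> N2" r] by force
  next
    case 3
    obtain A1 K1 \<G>1 A2 K2 \<G>2 where
      cov1: "partial_cover N1 r A1 K1 \<G>1" and cov2: "partial_cover N2 r A2 K2 \<G>2"
      using IH1 IH2 3 by blast
    define \<G> where "\<G> = insert (\<Union>N1 - A1) \<G>1 \<union> insert (\<Union>N2 - A2) \<G>2"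
    have "guarded_cover (\<Union>(N1 \<union> N2)) \<G>"
      using partial_cover_close(1)[OF cov1 att1] partial_cover_close(1)[OF cov2 att2]
      unfolding \<G>_def guarded_cover_def by auto
    moreover have "card \<G> + 2 \<le> 3 * card (?L (N1 \<union> N2) r)"
      using partial_cover_close(2)[OF cov1 att1] partial_cover_close(2)[OF cov2 att2] card_L
        card_Un_le[of "insert (\<Union>N1 - A1) \<G>1" "insert (\<Union>N2 - A2) \<G>2"]
      unfolding \<G>_def by linarith
    moreover have "r \<in> TV" using att by (auto simp: attached_def)
    ultimately have "partial_cover (N1 \<union> N2) r (\<Union>(N1 \<union> N2)) r \<G>"
      using attached_inner_boundary[OF att] by (auto simp: partial_cover_def inner_landmarks_def)
    then show ?thesis by blast
  qed
qed

lemma partial_cover_exists: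
  "rooted_subtree N r \<Longrightarrow> attached N r \<Longrightarrow> inner_landmarks N r \<noteq> {}
    \<Longrightarrow> \<exists>A K \<G>. partial_cover N r A K \<G>"
proof (induction rule: rooted_subtree.induct)
  case (single r)
  then show ?case by (simp add: inner_landmarks_def)
next
  case (add_root M c r)
  have "c \<in> M" using rooted_subtree_root[OF add_root.hyps(1)] .
  then have "attached M c" using attached_add_root add_root.prems(1) add_root.hyps(3) by blast
  then show ?case
    using partial_cover_add_root[OF add_root.prems(1) \<open>c \<in> M\<close> add_root.hyps(3) add_root.IH]
      add_root.prems(2) by blast
next
  case (glue N1 r N2)
  have r: "r \<in> N1" "r \<in> N2" using glue.hyps(1,2) by (simp_all add: rooted_subtree_root)
  have "attached N1 r" using attached_glue[OF glue.prems(1) r(1) glue.hyps(4)] .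
  moreover have "attached N2 r"
    using attached_glue[of N2 N1 r] glue.prems(1) r(2) glue.hyps(4) by (simp add: Un_commute Int_commute)
  ultimately show ?case
    using partial_cover_glue[OF glue.prems(1) r glue.hyps(4) glue.IH(1) glue.IH(2)] glue.prems(2)
    by blast
qed

lemma guarded_cover_exists:
  assumes "rooted_subtree TV r" "R \<noteq> {}"
  obtains \<G> where "guarded_cover V \<G>" "card \<G> \<le> 3 * card R"
proof -
  have att: "attached TV r" using rooted_subtree_root[OF assms(1)] by (simp add: attached_def)
  have fin: "finite R" using landmarks_subset finite_V by (rule finite_subset)
  show ?thesis
  proof (cases "inner_landmarks TV r = {}")
    case True
    have "card {V} \<le> 3 * card R" using assms(2) fin by (simp add: card_gt_0_iff Suc_le_eq)
    then show ?thesis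
      using that[of "{V}"] guarded_without_inner_landmarks[OF att True] bags_cover
      by (simp add: guarded_cover_def)
  next
    case False
    then obtain A K \<G> where cov: "partial_cover TV r A K \<G>"
      using partial_cover_exists[OF assms(1) att] by blast
    have "card (inner_landmarks TV r) \<le> card R"
      using fin by (auto simp: inner_landmarks_def intro: card_mono)
    then have "card (insert (\<Union>TV - A) \<G>) \<le> 3 * card R"
      using partial_cover_close(2)[OF cov att] by linarith
    then show ?thesis using that partial_cover_close(1)[OF cov att] bags_cover by simp
  qed
qed

end

section \<open>Counting a guarded class\<close>

context connected_simple_graph
begin

definition profile :: "'a set \<Rightarrow> 'a \<Rightarrow> 'a \<Rightarrow> nat" where
  "profile B v = restrict (\<lambda>s. D s v) B"

text \<open>Within a bag of diameter at most \<open>l\<close>, a profile is determined by its value at one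
  fixed vertex \<open>s\<^sub>0\<close> of the bag together with the offsets \<open>D s v + l - D s\<^sub>0 v \<in> {0..2 l}\<close>.\<close>

lemma card_profile_image:
  assumes "B \<subseteq> V" "S \<subseteq> V" "\<And>x y. x \<in> V \<Longrightarrow> y \<in> V \<Longrightarrow> D x y \<le> d"
    and "\<And>s t. s \<in> B \<Longrightarrow> t \<in> B \<Longrightarrow> D s t \<le> l"
  shows "card (profile B ` S) \<le> (d + 1) * (2 * l + 1) ^ card B"
proof (cases "B = {}")
  case True
  then have "profile B ` S \<subseteq> {\<lambda>_. undefined}" by (auto simp: profile_def)
  from card_mono[OF _ this] show ?thesis using True by simp
next
  case False
  then obtain s0 where s0: "s0 \<in> B" by blast
  have fin: "finite B" using assms(1) finite_V by (rule finite_subset)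
  define enc where "enc p = (p s0, restrict (\<lambda>s. p s + l - p s0) B)" for p :: "'a \<Rightarrow> nat"
  have below: "D s0 v \<le> D s v + l" if "s \<in> B" "v \<in> V" for s v
    using gdist_triangle[of s0 s v] assms(4)[OF s0 that(1)] subsetD[OF assms(1) s0]
      subsetD[OF assms(1) that(1)] that(2) by linarith
  have "inj_on enc (profile B ` S)"
  proof (rule inj_onI)
    fix p q assume "p \<in> profile B ` S" "q \<in> profile B ` S" and enc: "enc p = enc q"
    then obtain u v where u: "u \<in> V" "p = profile B u" and v: "v \<in> V" "q = profile B v"
      using assms(2) by blast
    have "p s = q s" if s: "s \<in> B" for s
    proof -
      have "p s0 = q s0" using enc by (simp add: enc_def)
      moreover have "p s + l - p s0 = q s + l - q s0"
        using arg_cong[OF enc, of "\<lambda>e. snd e s"] s by (simp add: enc_def)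
      ultimately show ?thesis using below[OF s u(1)] below[OF s v(1)] s s0 u v
        by (simp add: profile_def)
    qed
    then show "p = q" using u v by (auto simp: profile_def)
  qed
  moreover have "enc (profile B v) \<in> {0..d} \<times> (\<Pi>\<^sub>E s\<in>B. {0..2 * l})" if "v \<in> S" for v
  proof -
    have v: "v \<in> V" using that assms(2) by blast
    have "D s v + l - D s0 v \<le> 2 * l" if "s \<in> B" for s
      using gdist_triangle[of s s0 v] assms(4)[OF that s0] subsetD[OF assms(1) s0]
        subsetD[OF assms(1) that] v by linarith
    then show ?thesis
      using assms(1,3) s0 v by (auto simp: enc_def profile_def restrict_PiE_iff)
  qed
  then have "enc ` profile B ` S \<subseteq> {0..d} \<times> (\<Pi>\<^sub>E s\<in>B. {0..2 * l})" by blast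
  moreover have "finite ({0..d} \<times> (\<Pi>\<^sub>E s\<in>B. {0..2 * l}))" using fin by (simp add: finite_PiE)
  ultimately have "card (enc ` profile B ` S) \<le> card ({0..d} \<times> (\<Pi>\<^sub>E s\<in>B. {0..2 * l}))"
    using card_mono by blast
  then have "card (profile B ` S) \<le> card ({0..d} \<times> (\<Pi>\<^sub>E s\<in>B. {0..2 * l}))"
    using card_image[OF \<open>inj_on enc (profile B ` S)\<close>] by simp
  also have "\<dots> = (d + 1) * (2 * l + 1) ^ card B"
    using fin by (simp add: card_cartesian_product card_PiE)
  finally show ?thesis .
qed

lemma profile_eq_iff: "profile B u = profile B v \<longleftrightarrow> (\<forall>s\<in>B. D s u = D s v)"
proof
  show "profile B u = profile B v \<Longrightarrow> \<forall>s\<in>B. D s u = D s v"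
    unfolding profile_def by (metis restrict_apply')
qed (auto simp: profile_def intro: restrict_ext)

lemma inj_on_profile_resolving:
  assumes "resolving_set V E R" "g \<subseteq> V" "B \<subseteq> V"
    and "\<And>x v. x \<in> R \<Longrightarrow> v \<in> g \<Longrightarrow> \<exists>s\<in>B. D x v = D x s + D s v"
  shows "inj_on (profile B) g"
proof (rule inj_onI)
  fix u v assume u: "u \<in> g" and v: "v \<in> g" and eq: "profile B u = profile B v"
  have B: "D s u = D s v" if "s \<in> B" for s
    using eq that by (simp add: profile_eq_iff)
  have le: "D x b \<le> D x a"
    if x: "x \<in> R" and a: "a \<in> g" and b: "b \<in> g" and ab: "\<And>s. s \<in> B \<Longrightarrow> D s a = D s b" for x a b
  proof -
    obtain s where s: "s \<in> B" "D x a = D x s + D s a" using assms(4) x a by blast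
    have "x \<in> V" using x assms(1) by (auto simp: resolving_set_def)
    then have "D x b \<le> D x s + D s b"
      using gdist_triangle s(1) assms(2,3) b by blast
    then show ?thesis using s ab by simp
  qed
  have "D x u = D x v" if "x \<in> R" for x
    using le[OF that u v B] le[OF that v u] B by (simp add: le_antisym)
  then show "u = v" using assms(1,2) u v unfolding resolving_set_def by blast
qed

end

locale bounded_landmark_decomposition = landmark_decomposition +
  fixes d l w :: nat
  assumes resolving: "resolving_set V E R"
    and gdist_le_d: "\<And>x y. x \<in> V \<Longrightarrow> y \<in> V \<Longrightarrow> D x y \<le> d"
    and bag_gdist_le_l: "\<And>X x y. X \<in> TV \<Longrightarrow> x \<in> X \<Longrightarrow> y \<in> X \<Longrightarrow> D x y \<le> l"
    and card_bag_le: "\<And>X. X \<in> TV \<Longrightarrow> card X \<le> w + 1"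
begin

lemma card_profile_bag:
  assumes "X \<in> TV" "S \<subseteq> V"
  shows "card (profile X ` S) \<le> (d + 1) * (2 * l + 1) ^ (w + 1)"
proof -
  have "card (profile X ` S) \<le> (d + 1) * (2 * l + 1) ^ card X"
    using card_profile_image[OF bag_subset_V[OF assms(1)] assms(2) gdist_le_d bag_gdist_le_l[OF assms(1)]] .
  also have "\<dots> \<le> (d + 1) * (2 * l + 1) ^ (w + 1)"
    using card_bag_le[OF assms(1)] by (intro mult_left_mono power_increasing) simp_all
  finally show ?thesis .
qed

lemma card_guarded:
  assumes "guarded g"
  shows "card g \<le> ((d + 1) * (2 * l + 1) ^ (w + 1))\<^sup>2"
proof -
  obtain B1 B2 where B: "B1 \<in> TV" "B2 \<in> TV" and g: "g \<subseteq> V"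
    and route: "\<forall>x\<in>R. \<forall>v\<in>g. \<exists>s\<in>B1 \<union> B2. D x v = D x s + D s v"
    using assms unfolding guarded_def by blast
  have "B1 \<union> B2 \<subseteq> V" using bag_subset_V[OF B(1)] bag_subset_V[OF B(2)] by (rule Un_least)
  then have "inj_on (profile (B1 \<union> B2)) g"
    using inj_on_profile_resolving[OF resolving g] route by blast
  then have "inj_on (\<lambda>v. (profile B1 v, profile B2 v)) g"
    by (auto simp: inj_on_def profile_eq_iff)
  then have "card g \<le> card (profile B1 ` g \<times> profile B2 ` g)"
    using card_inj_on_le[of _ g "profile B1 ` g \<times> profile B2 ` g"] finite_subset[OF g finite_V]
    by (simp add: image_subset_iff finite_cartesian_product)
  also have "\<dots> \<le> ((d + 1) * (2 * l + 1) ^ (w + 1))\<^sup>2"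
    using card_profile_bag[OF B(1) g] card_profile_bag[OF B(2) g]
    by (simp add: card_cartesian_product power2_eq_square mult_le_mono)
  finally show ?thesis .
qed

lemma card_V_le:
  assumes "rooted_subtree TV r" "R \<noteq> {}"
  shows "card V \<le> 3 * card R * ((d + 1) * (2 * l + 1) ^ (w + 1))\<^sup>2"
proof -
  let ?M = "((d + 1) * (2 * l + 1) ^ (w + 1))\<^sup>2"
  obtain \<G> where cov: "guarded_cover V \<G>" and card: "card \<G> \<le> 3 * card R"
    using guarded_cover_exists[OF assms] .
  have fin: "finite \<G>" and sub: "V \<subseteq> \<Union>\<G>" and guarded: "\<And>g. g \<in> \<G> \<Longrightarrow> guarded g"
    using cov by (auto simp: guarded_cover_def)
  have "\<Union>\<G> \<subseteq> V" using guarded unfolding guarded_def by blast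
  with sub have "V = \<Union>\<G>" by (rule subset_antisym)
  then have "card V \<le> (\<Sum>g\<in>\<G>. card g)" using card_Union_le_sum_card by metis
  also have "\<dots> \<le> card \<G> * ?M" using sum_bounded_above[of \<G> card ?M] card_guarded guarded by auto
  also have "\<dots> \<le> 3 * card R * ?M" using card by simp
  finally show ?thesis .
qed

end

lemma gdist_le_diameter:
  assumes "finite V" "x \<in> V" "y \<in> V"
  shows "gdist V E x y \<le> diameter V E"
proof -
  have "{gdist V E x y | x y. x \<in> V \<and> y \<in> V} = (\<lambda>(x, y). gdist V E x y) ` (V \<times> V)" by auto
  then show ?thesis
    unfolding diameter_def using assms by (intro le_cSup_finite) auto
qed

lemma gdist_le_td_length:
  assumes "finite TV" "X \<in> TV" "finite X" "x \<in> X" "y \<in> X"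
  shows "gdist V E x y \<le> td_length V E TV"
proof -
  have "{gdist V E x y | x y. x \<in> X \<and> y \<in> X} = (\<lambda>(x, y). gdist V E x y) ` (X \<times> X)" by auto
  then have "gdist V E x y \<le> bag_diameter V E X"
    unfolding bag_diameter_def using assms(3-5) by (intro le_cSup_finite) auto
  also have "\<dots> \<le> td_length V E TV"
    unfolding td_length_def using assms(1,2) by (intro le_cSup_finite) (auto simp: Setcompr_eq_image)
  finally show ?thesis .
qed

lemma card_le_td_width:
  assumes "finite TV" "X \<in> TV"
  shows "card X \<le> td_width TV + 1"
proof -
  have "card X - 1 \<le> td_width TV"
    unfolding td_width_def using assms by (intro le_cSup_finite) (auto simp: Setcompr_eq_image)
  then show ?thesis by simp
qed

lemma square_bound_le:
  fixes d b w :: nat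
  assumes "d \<ge> 1" "b \<ge> 1" "w \<ge> 1"
  shows "((d + 1) * b ^ (w + 1))\<^sup>2 \<le> 4 * d\<^sup>2 * b ^ (3 * w + 1)"
proof -
  have "((d + 1) * b ^ (w + 1))\<^sup>2 = (d + 1)\<^sup>2 * b ^ ((w + 1) * 2)"
    by (simp only: power_mult_distrib power_mult)
  also have "\<dots> \<le> (2 * d)\<^sup>2 * b ^ (3 * w + 1)"
    using assms by (intro mult_mono power_mono power_increasing) simp_all
  finally show ?thesis by (simp add: power_mult_distrib)
qed

lemma card_le_resolving_bound:
  assumes "simple_graph V E" "connected_graph V E" "card V \<ge> 2"
    and "tree_decomposition V E TV TE" "resolving_set V E R"
  shows "card V \<le> 12 * card R * diameter V E ^ 2 * (2 * td_length V E TV + 1) ^ (3 * td_width TV + 1)"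
proof -
  interpret connected_simple_graph V E using assms(1,2) by unfold_locales
  have tree: "is_tree TV TE" and cover: "\<Union>TV = V" and edge: "\<And>u v. E u v \<Longrightarrow> \<exists>X\<in>TV. u \<in> X \<and> v \<in> X"
    and ri: "running_intersection TV TE"
    using assms(4) unfolding tree_decomposition_def running_intersection_def by blast+
  have fin: "finite TV" "\<And>X. X \<in> TV \<Longrightarrow> finite X"
    using tree cover finite_V by (auto simp: is_tree_def simple_graph_def intro: finite_subset)
  interpret bounded_landmark_decomposition V E TV R "diameter V E" "td_length V E TV" "td_width TV"
    using cover edge assms(5) gdist_le_diameter[OF finite_V] gdist_le_td_length[OF fin(1) _ fin(2)]
      card_le_td_width[OF fin(1)]
    by unfold_locales (auto simp: resolving_set_def)
  obtain r where r: "rooted_subtree TV r" using tree_rooted_subtree[OF tree ri] by blast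
  obtain u v where uv: "u \<in> V" "v \<in> V" "u \<noteq> v"
    using assms(3) card_le_Suc_iff[of 1 V] by (auto simp: card_gt_0_iff Suc_le_eq)
  then have "R \<noteq> {}" using resolving by (auto simp: resolving_set_def)
  have "diameter V E \<ge> 1"
    using gdist_le_diameter[OF finite_V uv(1,2), of E] gdist_eq_0_imp_eq[OF uv(1,2)] uv(3) by linarith
  moreover have "td_width TV \<ge> 1"
  proof -
    obtain a b X where "X \<in> TV" "a \<in> X" "b \<in> X" "a \<noteq> b"
      using edge_exists[OF uv] edge edge_irrefl by metis
    then have "2 \<le> card X" using fin(2) by (metis card_2_iff card_mono empty_subsetI insert_subset order_refl)
    then show ?thesis using card_le_td_width[OF fin(1) \<open>X \<in> TV\<close>] by linarith
  qed
  ultimately have "((diameter V E + 1) * (2 * td_length V E TV + 1) ^ (td_width TV + 1))\<^sup>2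
      \<le> 4 * diameter V E ^ 2 * (2 * td_length V E TV + 1) ^ (3 * td_width TV + 1)"
    by (intro square_bound_le) simp_all
  with card_V_le[OF r \<open>R \<noteq> {}\<close>] show ?thesis
    by (auto elim!: order.trans dest: mult_left_mono[where c = "3 * card R"])
qed

theorem theorem2:
  shows "\<exists>C::real. C > 0 \<and>
    (\<forall>(V::nat set) E TV TE R n d l w k.
       simple_graph V E \<and> connected_graph V E \<and> n = card V \<and> n \<ge> 2 \<and>
       d = diameter V E \<and>
       tree_decomposition V E TV TE \<and> reduced TV \<and>
       l = td_length V E TV \<and> w = td_width TV \<and>
       resolving_set V E R \<and> k = card R
       \<longrightarrow> real n \<le> C * real k * real d ^ 2 * (2 * real l + 1) ^ (3 * w + 1))"
proof (intro exI[of _ 12] conjI allI impI)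
  fix V :: "nat set" and E TV TE R n d l w k
  assume "simple_graph V E \<and> connected_graph V E \<and> n = card V \<and> n \<ge> 2 \<and>
       d = diameter V E \<and> tree_decomposition V E TV TE \<and> reduced TV \<and>
       l = td_length V E TV \<and> w = td_width TV \<and> resolving_set V E R \<and> k = card R"
  then have "n \<le> 12 * k * d ^ 2 * (2 * l + 1) ^ (3 * w + 1)"
    using card_le_resolving_bound[of V E TV TE R] by (elim conjE) simp
  then have "real n \<le> real (12 * k * d ^ 2 * (2 * l + 1) ^ (3 * w + 1))"
    by (simp only: of_nat_le_iff)
  then show "real n \<le> 12 * real k * real d ^ 2 * (2 * real l + 1) ^ (3 * w + 1)"
    by (simp only: of_nat_mult of_nat_power of_nat_add of_nat_numeral of_nat_1)
qed simp

end
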